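(* Let $a>0$, $\alpha\in[0,1)$ and $f\in\mathcal C_a$. For every $x\in(x_\alpha^-,a)$ we have $\mathrm{Sh}_\alpha(f)(x)<f(x)$ if and only if $x\in(u_\alpha,a)$. Moreover, the point of abscissa $u_\alpha$ is the unique intersection point of the graphs of $\mathrm{Sh}_\alpha(f)$ and $f$ with abscissa in $(x_\alpha^-,a)$.
   Context: $\mathcal C_a$ is the set of $C^1$ functions $f:\mathbb R\to\mathbb R$ that are even, satisfy $f(s)=|s|$ for $|s|\ge a$ and are strictly convex on $[-a,a]$. For $f\in\mathcal C_a$: $F_\alpha(s)=f(s)-\alpha s$, $x_\alpha^+=(f')^{-1}(\alpha)\in[0,a)$ (inverse of $f':[-a,a]\to[-1,1]$); $F_\alpha$ decreases on $(-\infty,x_\alpha^+]$ and increases on $[x_\alpha^+,\infty)$. Let $F_\alpha^{-1}$ be the inverse of $F_\alpha|_{[x_\alpha^+,\infty)}$ and $\phi=F_\alpha^{-1}\circ F_\alpha$; $\phi$ is a decreasing bijection $(-\infty,x_\alpha^+]\to[x_\alpha^+,\infty)$ and $x_\alpha^-<x_\alpha^+$ is the unique point with $\phi(x_\alpha^-)=a$. Let $\delta_x=(1-\alpha)^{-1}F_\alpha(x)-\phi(x)$, $s_\alpha=x_\alpha^++\delta_{x_\alpha^+}$; $x\mapsto x+\delta_x$ is an increasing bijection $(-\infty,x_\alpha^+]\to(-\infty,s_\alpha]$ with inverse $\tau$. Define $\mathrm{Sh}_\alpha(f)(x)=\alpha x+F_\alpha(\tau(x))$ for $x\le s_\alpha$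 and $=x$ for $x>s_\alpha$. Finally $u_\alpha$ denotes the unique element of $(x_\alpha^-,s_\alpha)$ such that $\phi(\tau(u_\alpha))=u_\alpha$. *)

theory Defs
  imports "HOL-Analysis.Analysis"
begin

definition strictly_convex_on :: "real set \<Rightarrow> (real \<Rightarrow> real) \<Rightarrow> bool" where
  "strictly_convex_on S f \<longleftrightarrow>
     (\<forall>x\<in>S. \<forall>y\<in>S. \<forall>t::real. x \<noteq> y \<and> 0 < t \<and> t < 1 \<longrightarrow>
        f ((1 - t) * x + t * y) < (1 - t) * f x + t * f y)"

definition class_C :: "real \<Rightarrow> (real \<Rightarrow> real) \<Rightarrow> bool" where
  "class_C a f \<longleftrightarrow>
     (\<forall>x. f differentiable (at x)) \<and> continuous_on UNIV (deriv f) \<and>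
     (\<forall>s. f (- s) = f s) \<and>
     (\<forall>s. \<bar>s\<bar> \<ge> a \<longrightarrow> f s = \<bar>s\<bar>) \<and>
     strictly_convex_on {-a..a} f"

definition F_al :: "(real \<Rightarrow> real) \<Rightarrow> real \<Rightarrow> real \<Rightarrow> real" where
  "F_al f \<alpha> s = f s - \<alpha> * s"

definition xplus :: "real \<Rightarrow> (real \<Rightarrow> real) \<Rightarrow> real \<Rightarrow> real" where
  "xplus a f \<alpha> = (THE x. x \<in> {-a..a} \<and> deriv f x = \<alpha>)"

definition Finv :: "real \<Rightarrow> (real \<Rightarrow> real) \<Rightarrow> real \<Rightarrow> real \<Rightarrow> real" where
  "Finv a f \<alpha> y = (THE t. t \<ge> xplus a f \<alpha> \<and> F_al f \<alpha> t = y)"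

definition phi :: "real \<Rightarrow> (real \<Rightarrow> real) \<Rightarrow> real \<Rightarrow> real \<Rightarrow> real" where
  "phi a f \<alpha> x = Finv a f \<alpha> (F_al f \<alpha> x)"

definition xminus :: "real \<Rightarrow> (real \<Rightarrow> real) \<Rightarrow> real \<Rightarrow> real" where
  "xminus a f \<alpha> = (THE x. x \<le> xplus a f \<alpha> \<and> phi a f \<alpha> x = a)"

definition delta :: "real \<Rightarrow> (real \<Rightarrow> real) \<Rightarrow> real \<Rightarrow> real \<Rightarrow> real" where
  "delta a f \<alpha> x = F_al f \<alpha> x / (1 - \<alpha>) - phi a f \<alpha> x"

definition s_al :: "real \<Rightarrow> (real \<Rightarrow> real) \<Rightarrow> real \<Rightarrow> real" where
  "s_al a f \<alpha> = xplus a f \<alpha> + delta a f \<alpha> (xplus a f \<alpha>)"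

definition tau :: "real \<Rightarrow> (real \<Rightarrow> real) \<Rightarrow> real \<Rightarrow> real \<Rightarrow> real" where
  "tau a f \<alpha> y = (THE x. x \<le> xplus a f \<alpha> \<and> x + delta a f \<alpha> x = y)"

definition Sh :: "real \<Rightarrow> (real \<Rightarrow> real) \<Rightarrow> real \<Rightarrow> real \<Rightarrow> real" where
  "Sh a f \<alpha> x = (if x \<le> s_al a f \<alpha> then \<alpha> * x + F_al f \<alpha> (tau a f \<alpha> x) else x)"

definition u_al :: "real \<Rightarrow> (real \<Rightarrow> real) \<Rightarrow> real \<Rightarrow> real" where
  "u_al a f \<alpha> = (THE u. xminus a f \<alpha> < u \<and> u < s_al a f \<alpha> \<and> phi a f \<alpha> (tau a f \<alpha> u) = u)"

end

theory Submission
  imports Defs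
begin

(* Write F for F_alpha. Since f' increases strictly on [-a,a] from -1 to 1 and is -1 resp. 1
   outside, F decreases left of x_alpha^+ and increases right of it, so phi is a decreasing
   bijection and, as F (phi x) = F x, delta_x = (f (phi x) - phi x) / (1 - alpha).  Because
   f(s) - s decreases and vanishes from a on, x + delta_x is strictly increasing and fixes
   x_alpha^-.
   For x in (x_alpha^-, s_alpha] put y = tau x < x.  Then Sh(f)(x) - f(x) = F y - F x, which is
   negative iff phi y < x, since F (phi y) = F y and F increases right of x_alpha^+.  The map
   v - phi (tau v) is strictly increasing (tau increases, phi decreases) and vanishes exactly
   at u_alpha.  Beyond s_alpha, Sh(f) is the identity, which lies strictly below f left of a. *)

lemma strictly_convex_onD:
  assumes "strictly_convex_on S f" "x \<in> S" "y \<in> S" "x \<noteq> y" "0 < t" "t < 1"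
  shows "f ((1 - t) * x + t * y) < (1 - t) * f x + t * f y"
  using assms unfolding strictly_convex_on_def by blast

lemma strictly_convex_on_imp_convex_on:
  assumes "convex S" and "strictly_convex_on S f"
  shows "convex_on S f"
proof (rule convex_onI[OF _ assms(1)])
  fix t x y :: real
  assume "0 < t" "t < 1" "x \<in> S" "y \<in> S"
  then show "f ((1 - t) *\<^sub>R x + t *\<^sub>R y) \<le> (1 - t) * f x + t * f y"
    using assms(2) unfolding strictly_convex_on_def
    by (cases "x = y") (simp add: algebra_simps, force)
qed

lemma strictly_convex_on_deriv_strict_mono:
  fixes f :: "real \<Rightarrow> real"
  assumes convex: "strictly_convex_on {l..r} f"
    and diff: "\<And>x. x \<in> {l<..<r} \<Longrightarrow> f differentiable at x"
  shows "strict_mono_on {l<..<r} (deriv f)"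
proof (rule strict_mono_onI)
  fix x y assume x: "x \<in> {l<..<r}" and y: "y \<in> {l<..<r}" and "x < y"
  define m where "m = (x + y) / 2"
  have tangent: "deriv f c * (m - c) \<le> f m - f c" if "c \<in> {l<..<r}" for c
  proof (rule convex_on_imp_above_tangent[where A = "{l..r}"])
    show "convex_on {l..r} f"
      using convex by (simp add: strictly_convex_on_imp_convex_on)
    show "(f has_field_derivative deriv f c) (at c within {l..r})"
      using diff[OF that] DERIV_deriv_iff_real_differentiable has_field_derivative_at_within
      by blast
  qed (use that x y in \<open>auto simp: m_def\<close>)
  have "f ((1 - 1/2) * x + 1/2 * y) < (1 - 1/2) * f x + 1/2 * f y"
    by (rule strictly_convex_onD[OF convex]) (use x y \<open>x < y\<close> in auto)
  moreover have "(1 - 1/2) * x + 1/2 * y = m"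
    by (simp add: m_def)
  ultimately have "2 * f m < f x + f y"
    by simp
  moreover have "m - x = (y - x) / 2" and "m - y = - ((y - x) / 2)"
    by (simp_all add: m_def field_simps)
  ultimately have "deriv f x * ((y - x) / 2) < deriv f y * ((y - x) / 2)"
    using tangent[OF x] tangent[OF y] by (simp only:)
  then show "deriv f x < deriv f y"
    using \<open>x < y\<close> by simp
qed

lemma strict_mono_on_Ioo_imp_Icc:
  fixes g :: "real \<Rightarrow> real"
  assumes cont: "continuous_on {l..r} g" and mono: "strict_mono_on {l<..<r} g"
  shows "strict_mono_on {l..r} g"
proof (rule strict_mono_onI)
  fix x y assume x: "x \<in> {l..r}" and y: "y \<in> {l..r}" and "x < y"
  define m\<^sub>1 m\<^sub>2 where "m\<^sub>1 = (2 * x + y) / 3" and "m\<^sub>2 = (x + 2 * y) / 3"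
  have m: "x < m\<^sub>1" "m\<^sub>1 < m\<^sub>2" "m\<^sub>2 < y"
    using \<open>x < y\<close> by (simp_all add: m\<^sub>1_def m\<^sub>2_def)
  have "g x \<le> g m\<^sub>1"
  proof (rule continuous_le_on_closure[where f = g and x = x and S = "{l<..<m\<^sub>1}"])
    show "continuous_on (closure {l<..<m\<^sub>1}) g"
      using m x y by (auto intro: continuous_on_subset[OF cont])
    show "g t \<le> g m\<^sub>1" if "t \<in> {l<..<m\<^sub>1}" for t
      using strict_mono_onD[OF mono, of t m\<^sub>1] that m x y by auto
  qed (use m x in auto)
  moreover have "g m\<^sub>2 \<le> g y"
  proof (rule continuous_ge_on_closure[where f = g and x = y and S = "{m\<^sub>2<..<r}"])
    show "continuous_on (closure {m\<^sub>2<..<r}) g"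
      using m x y by (auto intro: continuous_on_subset[OF cont])
    show "g m\<^sub>2 \<le> g t" if "t \<in> {m\<^sub>2<..<r}" for t
      using strict_mono_onD[OF mono, of m\<^sub>2 t] that m x y by auto
  qed (use m y in auto)
  ultimately show "g x < g y"
    using strict_mono_onD[OF mono, of m\<^sub>1 m\<^sub>2] m x y by auto
qed

locale class_C_function =
  fixes a :: real and f :: "real \<Rightarrow> real"
  assumes a_pos: "0 < a" and class_C: "class_C a f"
begin

lemma f_has_deriv: "(f has_real_derivative deriv f x) (at x)"
  using class_C unfolding class_C_def by (simp add: DERIV_deriv_iff_real_differentiable)

lemma continuous_on_f: "continuous_on S f"
  using f_has_deriv by (meson DERIV_isCont continuous_at_imp_continuous_on)

lemma continuous_on_deriv: "continuous_on S (deriv f)"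
  using class_C unfolding class_C_def by (metis continuous_on_subset subset_UNIV)

lemma f_eq_id: "a \<le> s \<Longrightarrow> f s = s"
  using class_C a_pos unfolding class_C_def by force

lemma f_eq_minus: "s \<le> -a \<Longrightarrow> f s = - s"
  using class_C a_pos unfolding class_C_def by force

lemma deriv_eq_1:
  assumes "a \<le> s"
  shows "deriv f s = 1"
proof (rule continuous_constant_on_closure[where S = "{a<..}" and f = "deriv f" and x = s])
  show "deriv f t = 1" if "t \<in> {a<..}" for t
  proof -
    have "\<forall>\<^sub>F x in nhds t. f x = x"
      using eventually_nhds_in_open[of "{a<..}" t] that a_pos
      by (auto elim!: eventually_mono intro: f_eq_id)
    then show ?thesis
      using deriv_cong_ev[of f "\<lambda>x. x" t t] by simp
  qed
qed (simp_all add: continuous_on_deriv assms)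

lemma deriv_eq_minus_1:
  assumes "s \<le> -a"
  shows "deriv f s = -1"
proof (rule continuous_constant_on_closure[where S = "{..<-a}" and f = "deriv f" and x = s])
  show "deriv f t = -1" if "t \<in> {..<-a}" for t
  proof -
    have "\<forall>\<^sub>F x in nhds t. f x = - x"
      using eventually_nhds_in_open[of "{..<-a}" t] that a_pos
      by (auto elim!: eventually_mono intro: f_eq_minus)
    then have "deriv f t = deriv (\<lambda>x. - x) t"
      by (rule deriv_cong_ev) simp
    also have "\<dots> = -1"
      by (rule DERIV_imp_deriv) (auto intro!: derivative_eq_intros)
    finally show ?thesis .
  qed
qed (simp_all add: continuous_on_deriv assms)

lemma deriv_strict_mono: "strict_mono_on {-a..a} (deriv f)"
proof (rule strict_mono_on_Ioo_imp_Icc[OF continuous_on_deriv])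
  show "strict_mono_on {-a<..<a} (deriv f)"
    using class_C f_has_deriv unfolding class_C_def
    by (intro strictly_convex_on_deriv_strict_mono) (auto simp: real_differentiable_def)
qed

lemma deriv_less_1: "s < a \<Longrightarrow> deriv f s < 1"
  using deriv_eq_minus_1[of s] deriv_eq_1[of a] strict_mono_onD[OF deriv_strict_mono, of s a]
  by (cases "s \<le> -a") auto

lemma f_minus_id_decreasing:
  assumes "s < t" "t \<le> a"
  shows "f t - t < f s - s"
proof (rule DERIV_neg_imp_decreasing_open[OF \<open>s < t\<close>])
  show "continuous_on {s..t} (\<lambda>x. f x - x)"
    by (intro continuous_intros continuous_on_f)
  show "\<exists>D. ((\<lambda>x. f x - x) has_real_derivative D) (at x) \<and> D < 0" if "s < x" "x < t" for x
    using that assms deriv_less_1[of x]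
    by (intro exI[of _ "deriv f x - 1"] conjI DERIV_diff f_has_deriv DERIV_ident) auto
qed

lemma f_minus_id_pos: "s < a \<Longrightarrow> 0 < f s - s"
  using f_minus_id_decreasing[of s a] f_eq_id[of a] by simp

lemma f_minus_id_antimono: "s \<le> t \<Longrightarrow> f t - t \<le> f s - s"
  using f_minus_id_decreasing[of s t] f_minus_id_pos[of s] f_eq_id[of s] f_eq_id[of t]
  by (cases "s = t"; cases "t \<le> a"; cases "s < a") auto

end

locale shift_setting = class_C_function +
  fixes \<alpha> :: real
  assumes \<alpha>_nonneg: "0 \<le> \<alpha>" and \<alpha>_less_1: "\<alpha> < 1"
begin

abbreviation "F\<^sub>\<alpha> \<equiv> F_al f \<alpha>"
abbreviation "xp \<equiv> xplus a f \<alpha>"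
abbreviation "xm \<equiv> xminus a f \<alpha>"
abbreviation "\<phi> \<equiv> phi a f \<alpha>"
abbreviation "\<delta> \<equiv> delta a f \<alpha>"
abbreviation "\<tau> \<equiv> tau a f \<alpha>"
abbreviation "s\<^sub>\<alpha> \<equiv> s_al a f \<alpha>"
abbreviation "u\<^sub>\<alpha> \<equiv> u_al a f \<alpha>"

lemma xplus_eq_the_inv_into: "xp = the_inv_into {-a..a} (deriv f) \<alpha>"
  by (simp add: xplus_def the_inv_into_def)

lemma xplus:
  shows xplus_mem: "xp \<in> {-a<..<a}" and deriv_xplus: "deriv f xp = \<alpha>"
proof -
  obtain x where x: "-a \<le> x" "x \<le> a" "deriv f x = \<alpha>"
    using IVT'[of "deriv f" "-a" \<alpha> a] deriv_eq_1[of a] deriv_eq_minus_1[of "-a"]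
      \<alpha>_nonneg \<alpha>_less_1 a_pos continuous_on_deriv
    by auto
  have "xp = x"
    unfolding xplus_eq_the_inv_into
    by (rule the_inv_into_f_eq) (use x strict_mono_on_imp_inj_on[OF deriv_strict_mono] in auto)
  moreover have "x \<noteq> a" "x \<noteq> -a"
    using x deriv_eq_1[of a] deriv_eq_minus_1[of "-a"] \<alpha>_nonneg \<alpha>_less_1 by auto
  ultimately show "xp \<in> {-a<..<a}" "deriv f xp = \<alpha>"
    using x by auto
qed

lemma deriv_less_alpha: "s < xp \<Longrightarrow> deriv f s < \<alpha>"
  using deriv_eq_minus_1[of s] strict_mono_onD[OF deriv_strict_mono, of s xp] xplus \<alpha>_nonneg
  by (cases "s \<le> -a") auto

lemma alpha_less_deriv: "xp < s \<Longrightarrow> \<alpha> < deriv f s"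
  using deriv_eq_1[of s] strict_mono_onD[OF deriv_strict_mono, of xp s] xplus \<alpha>_less_1
  by (cases "a \<le> s") auto

lemma F_has_deriv: "(F\<^sub>\<alpha> has_real_derivative deriv f x - \<alpha>) (at x)"
proof -
  have "F\<^sub>\<alpha> = (\<lambda>s. f s - \<alpha> * s)"
    by (simp add: fun_eq_iff F_al_def)
  then show ?thesis
    using DERIV_diff[OF f_has_deriv DERIV_cmult[OF DERIV_ident]] by simp
qed

lemma continuous_on_F: "continuous_on S F\<^sub>\<alpha>"
  using F_has_deriv by (meson DERIV_isCont continuous_at_imp_continuous_on)

lemma F_decreasing: "x < y \<Longrightarrow> y \<le> xp \<Longrightarrow> F\<^sub>\<alpha> y < F\<^sub>\<alpha> x"
  by (rule DERIV_neg_imp_decreasing_open[OF _ _ continuous_on_F])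
     (use F_has_deriv deriv_less_alpha in force)+

lemma F_less_iff_left: "x \<le> xp \<Longrightarrow> y \<le> xp \<Longrightarrow> F\<^sub>\<alpha> x < F\<^sub>\<alpha> y \<longleftrightarrow> y < x"
  using F_decreasing by (metis less_asym linorder_cases)

lemma F_strict_mono: "strict_mono_on {xp..} F\<^sub>\<alpha>"
proof (rule strict_mono_onI)
  fix x y assume "x \<in> {xp..}" "y \<in> {xp..}" "x < y"
  then show "F\<^sub>\<alpha> x < F\<^sub>\<alpha> y"
    by (intro DERIV_pos_imp_increasing_open[OF _ _ continuous_on_F])
       (use F_has_deriv alpha_less_deriv in force)+
qed

lemma F_eq: "a \<le> x \<Longrightarrow> F\<^sub>\<alpha> x = (1 - \<alpha>) * x"
  using f_eq_id by (simp add: F_al_def algebra_simps)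

lemma Finv_eq_the_inv_into: "Finv a f \<alpha> = the_inv_into {xp..} F\<^sub>\<alpha>"
  by (simp add: fun_eq_iff Finv_def the_inv_into_def)

lemma Finv_F: "xp \<le> t \<Longrightarrow> Finv a f \<alpha> (F\<^sub>\<alpha> t) = t"
  unfolding Finv_eq_the_inv_into
  by (rule the_inv_into_f_f) (simp_all add: strict_mono_on_imp_inj_on[OF F_strict_mono])

lemma F_surj_right:
  assumes "F\<^sub>\<alpha> xp \<le> y"
  obtains t where "xp \<le> t" "F\<^sub>\<alpha> t = y"
proof -
  define b where "b = max a (y / (1 - \<alpha>))"
  have "y \<le> (1 - \<alpha>) * b"
    using \<alpha>_less_1 by (simp add: b_def field_simps max_def)
  then have "y \<le> F\<^sub>\<alpha> b"
    by (simp add: F_eq b_def)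
  moreover have "xp \<le> b"
    using xplus_mem by (auto simp: b_def le_max_iff_disj)
  ultimately show ?thesis
    using IVT'[OF assms _ _ continuous_on_F] that by blast
qed

lemma phi_eqI: "xp \<le> t \<Longrightarrow> F\<^sub>\<alpha> t = F\<^sub>\<alpha> x \<Longrightarrow> \<phi> x = t"
  using Finv_F unfolding phi_def by metis

lemma phi:
  assumes "x \<le> xp"
  shows phi_ge_xplus: "xp \<le> \<phi> x" and F_phi: "F\<^sub>\<alpha> (\<phi> x) = F\<^sub>\<alpha> x"
proof -
  have "F\<^sub>\<alpha> xp \<le> F\<^sub>\<alpha> x"
    using F_decreasing[of x xp] assms by (cases "x = xp") auto
  then obtain t where t: "xp \<le> t" "F\<^sub>\<alpha> t = F\<^sub>\<alpha> x"
    by (rule F_surj_right)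
  then have "\<phi> x = t"
    by (rule phi_eqI)
  with t show "xp \<le> \<phi> x" "F\<^sub>\<alpha> (\<phi> x) = F\<^sub>\<alpha> x"
    by simp_all
qed

lemma phi_xplus: "\<phi> xp = xp"
  by (rule phi_eqI) simp_all

lemma phi_less_iff:
  assumes "x \<le> xp" "y \<le> xp"
  shows "\<phi> x < \<phi> y \<longleftrightarrow> y < x"
proof -
  have "\<phi> x < \<phi> y \<longleftrightarrow> F\<^sub>\<alpha> (\<phi> x) < F\<^sub>\<alpha> (\<phi> y)"
    using strict_mono_on_less[OF F_strict_mono] phi_ge_xplus assms by simp
  also have "\<dots> \<longleftrightarrow> y < x"
    using F_phi F_less_iff_left assms by simp
  finally show ?thesis .
qed

lemma continuous_on_phi: "continuous_on {l..xp} \<phi>"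
proof -
  have "continuous_on (F\<^sub>\<alpha> ` {xp..\<phi> l}) (Finv a f \<alpha>)"
    by (rule continuous_on_inv[OF continuous_on_F compact_Icc]) (simp add: Finv_F)
  moreover have "F\<^sub>\<alpha> ` {l..xp} \<subseteq> F\<^sub>\<alpha> ` {xp..\<phi> l}"
  proof
    fix y assume "y \<in> F\<^sub>\<alpha> ` {l..xp}"
    then obtain x where x: "x \<in> {l..xp}" "y = F\<^sub>\<alpha> x"
      by blast
    then have "\<phi> x \<in> {xp..\<phi> l}" "y = F\<^sub>\<alpha> (\<phi> x)"
      using phi_ge_xplus F_phi phi_less_iff[of x l] by auto
    then show "y \<in> F\<^sub>\<alpha> ` {xp..\<phi> l}"
      by blast
  qed
  ultimately have "continuous_on {l..xp} (Finv a f \<alpha> \<circ> F\<^sub>\<alpha>)"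
    by (intro continuous_on_compose continuous_on_F) (rule continuous_on_subset)
  then show ?thesis
    by (simp add: comp_def phi_def[abs_def])
qed

lemma xminus_eq_the_inv_into: "xm = the_inv_into {..xp} \<phi> a"
  by (simp add: xminus_def the_inv_into_def)

lemma xminus:
  shows xminus_less_xplus: "xm < xp" and phi_xminus: "\<phi> xm = a"
proof -
  have "F\<^sub>\<alpha> xp < F\<^sub>\<alpha> a"
    using strict_mono_onD[OF F_strict_mono, of xp a] xplus_mem by simp
  moreover have "F\<^sub>\<alpha> a \<le> F\<^sub>\<alpha> (-a)"
    using F_eq[of a] f_eq_minus[of "-a"] a_pos \<alpha>_nonneg by (simp add: F_al_def algebra_simps)
  ultimately obtain x where x: "-a \<le> x" "x \<le> xp" "F\<^sub>\<alpha> x = F\<^sub>\<alpha> a"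
    using IVT2'[of F\<^sub>\<alpha> xp "F\<^sub>\<alpha> a" "-a", OF _ _ _ continuous_on_F] xplus_mem by auto
  have phi_x: "\<phi> x = a"
    using phi_eqI[of a x] x xplus_mem by simp
  have "inj_on \<phi> {..xp}"
    using phi_less_iff by (intro linorder_inj_onI') (metis atMost_iff less_irrefl)
  then have "xm = x"
    unfolding xminus_eq_the_inv_into by (rule the_inv_into_f_eq) (use x phi_x in auto)
  moreover have "x \<noteq> xp"
    using x \<open>F\<^sub>\<alpha> xp < F\<^sub>\<alpha> a\<close> by auto
  ultimately show "xm < xp" "\<phi> xm = a"
    using x phi_x by auto
qed

lemma phi_less_a_iff: "x \<le> xp \<Longrightarrow> \<phi> x < a \<longleftrightarrow> xm < x"
  using phi_less_iff[of x xm] phi_xminus xminus_less_xplus by simp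

lemma delta_eq: "x \<le> xp \<Longrightarrow> \<delta> x = (f (\<phi> x) - \<phi> x) / (1 - \<alpha>)"
  using F_phi[of x] \<alpha>_less_1 by (simp add: delta_def F_al_def field_simps)

lemma delta_pos: "xm < x \<Longrightarrow> x \<le> xp \<Longrightarrow> 0 < \<delta> x"
  using delta_eq f_minus_id_pos phi_less_a_iff \<alpha>_less_1 by simp

lemma delta_xminus: "\<delta> xm = 0"
  using delta_eq[of xm] xminus_less_xplus phi_xminus f_eq_id[of a] by simp

lemma x_plus_delta_strict_mono: "strict_mono_on {..xp} (\<lambda>x. x + \<delta> x)"
proof (rule strict_mono_onI)
  fix x y assume "x \<in> {..xp}" "y \<in> {..xp}" "x < y"
  then have "\<phi> y \<le> \<phi> x"
    using phi_less_iff[of x y] by auto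
  then have "\<delta> x \<le> \<delta> y"
    using delta_eq \<open>x \<in> {..xp}\<close> \<open>y \<in> {..xp}\<close> f_minus_id_antimono \<alpha>_less_1
    by (simp add: divide_right_mono)
  with \<open>x < y\<close> show "x + \<delta> x < y + \<delta> y"
    by simp
qed

lemma continuous_on_x_plus_delta: "continuous_on {l..xp} (\<lambda>x. x + \<delta> x)"
  unfolding delta_def using \<alpha>_less_1
  by (intro continuous_intros continuous_on_F continuous_on_phi) auto

lemma tau_eq_the_inv_into: "\<tau> = the_inv_into {..xp} (\<lambda>x. x + \<delta> x)"
  by (simp add: fun_eq_iff tau_def the_inv_into_def)

lemma tau_x_plus_delta: "x \<le> xp \<Longrightarrow> \<tau> (x + \<delta> x) = x"
  unfolding tau_eq_the_inv_into
  by (rule the_inv_into_f_f) (simp_all add: strict_mono_on_imp_inj_on[OF x_plus_delta_strict_mono])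

lemma tau:
  assumes "y \<in> {xm..s\<^sub>\<alpha>}"
  shows tau_mem: "\<tau> y \<in> {xm..xp}" and tau_inverse: "\<tau> y + \<delta> (\<tau> y) = y"
proof -
  obtain x where "xm \<le> x" "x \<le> xp" "x + \<delta> x = y"
    using IVT'[of "\<lambda>x. x + \<delta> x" xm y xp, OF _ _ _ continuous_on_x_plus_delta]
      assms delta_xminus xminus_less_xplus by (auto simp: s_al_def)
  then show "\<tau> y \<in> {xm..xp}" "\<tau> y + \<delta> (\<tau> y) = y"
    using tau_x_plus_delta by auto
qed

lemma id_minus_phi_tau_strict_mono: "strict_mono_on {xm..s\<^sub>\<alpha>} (\<lambda>v. v - \<phi> (\<tau> v))"
proof (rule strict_mono_onI)
  fix v w assume v: "v \<in> {xm..s\<^sub>\<alpha>}" and w: "w \<in> {xm..s\<^sub>\<alpha>}" and "v < w"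
  have "\<tau> v \<le> \<tau> w"
    using strict_mono_on_less_eq[OF x_plus_delta_strict_mono, of "\<tau> v" "\<tau> w"]
      tau_mem[OF v] tau_mem[OF w] tau_inverse[OF v] tau_inverse[OF w] \<open>v < w\<close>
    by simp
  then have "\<phi> (\<tau> w) \<le> \<phi> (\<tau> v)"
    using phi_less_iff[of "\<tau> v" "\<tau> w"] tau_mem[OF v] tau_mem[OF w] by auto
  with \<open>v < w\<close> show "v - \<phi> (\<tau> v) < w - \<phi> (\<tau> w)"
    by simp
qed

lemma phi_tau_fixed_point_exists: "\<exists>u \<in> {xm<..<s\<^sub>\<alpha>}. \<phi> (\<tau> u) = u"
proof -
  have "xm + \<delta> xm - \<phi> xm < 0"
    using delta_xminus phi_xminus xminus_less_xplus xplus_mem by simp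
  moreover have "0 < xp + \<delta> xp - \<phi> xp"
    using delta_pos[of xp] phi_xplus xminus_less_xplus by simp
  moreover have "continuous_on {xm..xp} (\<lambda>x. x + \<delta> x - \<phi> x)"
    by (intro continuous_on_diff continuous_on_x_plus_delta continuous_on_phi)
  ultimately obtain y where y: "xm \<le> y" "y \<le> xp" "\<phi> y = y + \<delta> y"
    using IVT'[of "\<lambda>x. x + \<delta> x - \<phi> x" xm 0 xp] xminus_less_xplus by force
  then have "y \<noteq> xm" "y \<noteq> xp"
    using \<open>xm + \<delta> xm - \<phi> xm < 0\<close> \<open>0 < xp + \<delta> xp - \<phi> xp\<close> by auto
  then have "y + \<delta> y \<in> {xm<..<s\<^sub>\<alpha>}"
    using strict_mono_onD[OF x_plus_delta_strict_mono, of xm y]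
      strict_mono_onD[OF x_plus_delta_strict_mono, of y xp] y xminus_less_xplus delta_xminus
    by (auto simp: s_al_def)
  moreover have "\<phi> (\<tau> (y + \<delta> y)) = y + \<delta> y"
    using tau_x_plus_delta y by simp
  ultimately show ?thesis
    by blast
qed

lemma u_al:
  shows u_al_mem: "u\<^sub>\<alpha> \<in> {xm<..<s\<^sub>\<alpha>}" and phi_tau_u_al: "\<phi> (\<tau> u\<^sub>\<alpha>) = u\<^sub>\<alpha>"
proof -
  obtain u where u: "u \<in> {xm<..<s\<^sub>\<alpha>}" "\<phi> (\<tau> u) = u"
    using phi_tau_fixed_point_exists by blast
  have "u\<^sub>\<alpha> = u"
    unfolding u_al_def
  proof (rule the_equality)
    fix v assume "xm < v \<and> v < s\<^sub>\<alpha> \<and> \<phi> (\<tau> v) = v"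
    then show "v = u"
      using strict_mono_on_eqD[OF id_minus_phi_tau_strict_mono, of v u] u by auto
  qed (use u in auto)
  with u show "u\<^sub>\<alpha> \<in> {xm<..<s\<^sub>\<alpha>}" "\<phi> (\<tau> u\<^sub>\<alpha>) = u\<^sub>\<alpha>"
    by simp_all
qed

lemma u_al_less_a: "u\<^sub>\<alpha> < a"
proof -
  have "\<tau> u\<^sub>\<alpha> \<noteq> xm"
    using tau_inverse[of u\<^sub>\<alpha>] u_al_mem delta_xminus by auto
  then have "xm < \<tau> u\<^sub>\<alpha>" "\<tau> u\<^sub>\<alpha> \<le> xp"
    using tau_mem[of u\<^sub>\<alpha>] u_al_mem by auto
  then show ?thesis
    using phi_less_a_iff phi_tau_u_al by metis
qed

lemma F_compare_phi:
  assumes "y \<le> xp" "y < x"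
  shows F_less_iff_phi_less: "F\<^sub>\<alpha> y < F\<^sub>\<alpha> x \<longleftrightarrow> \<phi> y < x"
    and F_eq_iff_phi_eq: "F\<^sub>\<alpha> x = F\<^sub>\<alpha> y \<longleftrightarrow> x = \<phi> y"
proof -
  have "(F\<^sub>\<alpha> y < F\<^sub>\<alpha> x \<longleftrightarrow> \<phi> y < x) \<and> (F\<^sub>\<alpha> x = F\<^sub>\<alpha> y \<longleftrightarrow> x = \<phi> y)"
  proof (cases "x \<le> xp")
    case True
    then have "F\<^sub>\<alpha> x < F\<^sub>\<alpha> y"
      using F_decreasing assms by simp
    moreover have "x \<le> \<phi> y"
      using phi_ge_xplus[OF assms(1)] True by linarith
    ultimately show ?thesis
      using F_phi[OF assms(1)] by auto
  next
    case False
    then show ?thesis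
      using strict_mono_on_less[OF F_strict_mono, of "\<phi> y" x]
        strict_mono_on_eq[OF F_strict_mono, of x "\<phi> y"]
        F_phi[OF assms(1)] phi_ge_xplus[OF assms(1)]
      by auto
  qed
  then show "F\<^sub>\<alpha> y < F\<^sub>\<alpha> x \<longleftrightarrow> \<phi> y < x" "F\<^sub>\<alpha> x = F\<^sub>\<alpha> y \<longleftrightarrow> x = \<phi> y"
    by simp_all
qed

lemma Sh_compare_below_s:
  assumes "xm < x" "x \<le> s\<^sub>\<alpha>"
  shows Sh_less_iff_below_s: "Sh a f \<alpha> x < f x \<longleftrightarrow> \<phi> (\<tau> x) < x"
    and Sh_eq_iff_below_s: "Sh a f \<alpha> x = f x \<longleftrightarrow> \<phi> (\<tau> x) = x"
proof -
  define y where "y = \<tau> x"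
  have x: "x \<in> {xm..s\<^sub>\<alpha>}"
    using assms by simp
  have y: "y \<in> {xm..xp}" "y + \<delta> y = x"
    using tau_mem[OF x] tau_inverse[OF x] by (simp_all add: y_def)
  then have "y \<noteq> xm"
    using delta_xminus assms by auto
  then have "y < x"
    using delta_pos y by force
  have "Sh a f \<alpha> x - f x = F\<^sub>\<alpha> y - F\<^sub>\<alpha> x"
    using assms by (simp add: Sh_def y_def F_al_def)
  then show "Sh a f \<alpha> x < f x \<longleftrightarrow> \<phi> (\<tau> x) < x" "Sh a f \<alpha> x = f x \<longleftrightarrow> \<phi> (\<tau> x) = x"
    using F_less_iff_phi_less[of y x] F_eq_iff_phi_eq[of y x] y(1) \<open>y < x\<close>
    unfolding y_def by auto
qed

lemma Sh_less_f_iff: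
  assumes "xm < x" "x < a"
  shows "Sh a f \<alpha> x < f x \<longleftrightarrow> u\<^sub>\<alpha> < x"
proof (cases "x \<le> s\<^sub>\<alpha>")
  case True
  have "\<phi> (\<tau> x) < x \<longleftrightarrow> u\<^sub>\<alpha> - \<phi> (\<tau> u\<^sub>\<alpha>) < x - \<phi> (\<tau> x)"
    using phi_tau_u_al by simp
  also have "\<dots> \<longleftrightarrow> u\<^sub>\<alpha> < x"
    using strict_mono_on_less[OF id_minus_phi_tau_strict_mono, of u\<^sub>\<alpha> x] u_al_mem assms True
    by simp
  finally show ?thesis
    using Sh_less_iff_below_s[OF assms(1) True] by simp
next
  case False
  then show ?thesis
    using f_minus_id_pos[OF assms(2)] u_al_mem by (simp add: Sh_def)
qed

lemma Sh_eq_f_iff: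
  assumes "xm < x" "x < a"
  shows "Sh a f \<alpha> x = f x \<longleftrightarrow> x = u\<^sub>\<alpha>"
proof (cases "x \<le> s\<^sub>\<alpha>")
  case True
  have "\<phi> (\<tau> x) = x \<longleftrightarrow> x - \<phi> (\<tau> x) = u\<^sub>\<alpha> - \<phi> (\<tau> u\<^sub>\<alpha>)"
    using phi_tau_u_al by auto
  also have "\<dots> \<longleftrightarrow> x = u\<^sub>\<alpha>"
    using strict_mono_on_eq[OF id_minus_phi_tau_strict_mono, of x u\<^sub>\<alpha>] u_al_mem assms True
    by simp
  finally show ?thesis
    using Sh_eq_iff_below_s[OF assms(1) True] by simp
next
  case False
  then show ?thesis
    using f_minus_id_pos[OF assms(2)] u_al_mem by (auto simp: Sh_def)
qed

end

theorem proposition3p28: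
  fixes a \<alpha> :: real and f :: "real \<Rightarrow> real"
  assumes "a > 0" and "0 \<le> \<alpha>" and "\<alpha> < 1" and "class_C a f"
  shows "(\<forall>x \<in> {xminus a f \<alpha><..<a}. Sh a f \<alpha> x < f x \<longleftrightarrow> x \<in> {u_al a f \<alpha><..<a})
       \<and> u_al a f \<alpha> \<in> {xminus a f \<alpha><..<a}
       \<and> (\<forall>x \<in> {xminus a f \<alpha><..<a}. Sh a f \<alpha> x = f x \<longleftrightarrow> x = u_al a f \<alpha>)"
proof -
  interpret shift_setting a f \<alpha>
    using assms by unfold_locales
  have "u\<^sub>\<alpha> \<in> {xm<..<a}"
    using u_al_mem u_al_less_a by simp
  moreover have "\<forall>x \<in> {xm<..<a}. Sh a f \<alpha> x < f x \<longleftrightarrow> x \<in> {u\<^sub>\<alpha><..<a}"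
    using Sh_less_f_iff by simp
  moreover have "\<forall>x \<in> {xm<..<a}. Sh a f \<alpha> x = f x \<longleftrightarrow> x = u\<^sub>\<alpha>"
    using Sh_eq_f_iff by simp
  ultimately show ?thesis
    by blast
qed

end
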